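(* Let $\mathcal G=(V_{\min},V_{\max},E,w,\lambda)$ be a discounted payoff game, not all of whose joint strategies are co-optimal, with contraction $\lambda^*$ and gap $\gamma$, and let $0<\varepsilon\le\frac{1-\lambda^*}{3}\gamma$. Let $\mathcal G'=(V_{\min},V_{\max},E,w',\lambda)$ be obtained from $\mathcal G$ by adding to every edge weight a value drawn independently and uniformly at random from $(-\varepsilon,\varepsilon)$. Then every joint strategy that is co-optimal for $\mathcal G'$ is also co-optimal for $\mathcal G$, and $\mathcal G'$ is almost surely sharp.
   Context: A discounted payoff game is a tuple $\mathcal G=(V_{\min},V_{\max},E,w,\lambda)$ with $V=V_{\min}\cup V_{\max}$ finite (disjoint union of Min and Max vertices), $E\subseteq V\times V$ with every vertex having an outgoing edge, $w:E\to\mathbb R$, $\lambda:E\to[0,1)$. The outcome of a play $e_0e_1\ldots$ is $\sum_{i\ge0}w_{e_i}\prod_{j<i}\lambda_{e_j}$. A joint strategy is a map $\sigma:V\to V$ with $(v,\sigma(v))\in E$; $\mathrm{val}(\sigma)(v)$ is the outcome of the play from $v$ following $\sigma$; the game value $\mathrm{val}(\mathcal G)(v)$ is $\sup_{\sigma_{\max}}\inf_{\sigma_{\min}}$ of the outcome from $v$ over positional strategies; $\sigma$ is co-optimal iff $\mathrm{val}(\sigma)=\mathrm{val}(\mathcal G)$. $\mathsf{offset}(x,(v,v'))=x(v)-(w_{(v,v')}+\lambda_{(v,v')}x(v'))$ if $v\in V_{\max}$, and $(w_{(v,v')}+\lambda_{(v,v')}x(v'))-x(v)$ otherwise. Contraction: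 $\lambda^*=\max_e\lambda_e$. For non-co-optimal $\sigma$, $\gamma_\sigma=-\min\{\mathsf{offset}(\mathrm{val}(\sigma),e)\mid e\in E\}$; the gap $\gamma$ is the minimum of $\gamma_\sigma$ over all non-co-optimal joint strategies. $H$ is the system of inequations over $x\in\mathbb R^V$ containing, for each edge $e=(v,v')$, $x(v)\ge w_e+\lambda_e x(v')$ if $v\in V_{\max}$ and $\le$ if $v\in V_{\min}$. A basis of $H$ is a set of $|V|$ inequations whose equality versions have a unique common solution; if it satisfies $H$ it is the basis valuation. The game is sharp if every basis valuation satisfies exactly $|V|$ inequations of $H$ with equality. *)

theory Defs
  imports "HOL-Analysis.Analysis"
begin

(* A discounted payoff game over the finite vertex type 'v:
   Vmax :: 'v set are the Max vertices, V_min = UNIV - Vmax (disjoint union = all of V). *)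

definition discounted_game :: "('v::finite \<times> 'v) set \<Rightarrow> ('v \<times> 'v \<Rightarrow> real) \<Rightarrow> bool" where
  "discounted_game E lam \<longleftrightarrow>
     (\<forall>v. \<exists>v'. (v, v') \<in> E) \<and> (\<forall>e\<in>E. 0 \<le> lam e \<and> lam e < 1)"

definition joint_strategy :: "('v \<times> 'v) set \<Rightarrow> ('v \<Rightarrow> 'v) \<Rightarrow> bool" where
  "joint_strategy E \<sigma> \<longleftrightarrow> (\<forall>v. (v, \<sigma> v) \<in> E)"

definition play :: "('v \<Rightarrow> 'v) \<Rightarrow> 'v \<Rightarrow> nat \<Rightarrow> 'v" where
  "play \<sigma> v i = (\<sigma> ^^ i) v"

definition strat_val :: "('v \<times> 'v \<Rightarrow> real) \<Rightarrow> ('v \<times> 'v \<Rightarrow> real) \<Rightarrow> ('v \<Rightarrow> 'v) \<Rightarrow> 'v \<Rightarrow> real" where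
  "strat_val w lam \<sigma> v =
     (\<Sum>i. w (play \<sigma> v i, play \<sigma> v (Suc i)) *
            (\<Prod>j<i. lam (play \<sigma> v j, play \<sigma> v (Suc j))))"

(* val(G)(v) = sup over Max positional strategies of inf over Min positional strategies;
   a positional strategy of a player is represented by a joint strategy restricted to
   that player's vertices *)
definition game_val :: "'v set \<Rightarrow> ('v \<times> 'v) set \<Rightarrow> ('v \<times> 'v \<Rightarrow> real) \<Rightarrow> ('v \<times> 'v \<Rightarrow> real) \<Rightarrow> 'v \<Rightarrow> real" where
  "game_val Vmax E w lam v =
     (SUP \<sigma>1 \<in> {\<sigma>. joint_strategy E \<sigma>}. INF \<sigma>2 \<in> {\<sigma>. joint_strategy E \<sigma>}.
        strat_val w lam (\<lambda>u. if u \<in> Vmax then \<sigma>1 u else \<sigma>2 u) v)"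

definition co_optimal :: "'v set \<Rightarrow> ('v \<times> 'v) set \<Rightarrow> ('v \<times> 'v \<Rightarrow> real) \<Rightarrow> ('v \<times> 'v \<Rightarrow> real) \<Rightarrow> ('v \<Rightarrow> 'v) \<Rightarrow> bool" where
  "co_optimal Vmax E w lam \<sigma> \<longleftrightarrow>
     joint_strategy E \<sigma> \<and> strat_val w lam \<sigma> = game_val Vmax E w lam"

definition offset :: "'v set \<Rightarrow> ('v \<times> 'v \<Rightarrow> real) \<Rightarrow> ('v \<times> 'v \<Rightarrow> real) \<Rightarrow> ('v \<Rightarrow> real) \<Rightarrow> 'v \<times> 'v \<Rightarrow> real" where
  "offset Vmax w lam x e =
     (if fst e \<in> Vmax then x (fst e) - (w e + lam e * x (snd e))
      else (w e + lam e * x (snd e)) - x (fst e))"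

definition contraction :: "('v \<times> 'v) set \<Rightarrow> ('v \<times> 'v \<Rightarrow> real) \<Rightarrow> real" where
  "contraction E lam = Max (lam ` E)"

definition gamma_strat :: "'v set \<Rightarrow> ('v \<times> 'v) set \<Rightarrow> ('v \<times> 'v \<Rightarrow> real) \<Rightarrow> ('v \<times> 'v \<Rightarrow> real) \<Rightarrow> ('v \<Rightarrow> 'v) \<Rightarrow> real" where
  "gamma_strat Vmax E w lam \<sigma> = - Min (offset Vmax w lam (strat_val w lam \<sigma>) ` E)"

definition gap :: "'v::finite set \<Rightarrow> ('v \<times> 'v) set \<Rightarrow> ('v \<times> 'v \<Rightarrow> real) \<Rightarrow> ('v \<times> 'v \<Rightarrow> real) \<Rightarrow> real" where
  "gap Vmax E w lam =
     Min (gamma_strat Vmax E w lam ` {\<sigma>. joint_strategy E \<sigma> \<and> \<not> co_optimal Vmax E w lam \<sigma>})"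

definition satisfies_H :: "'v set \<Rightarrow> ('v \<times> 'v) set \<Rightarrow> ('v \<times> 'v \<Rightarrow> real) \<Rightarrow> ('v \<times> 'v \<Rightarrow> real) \<Rightarrow> ('v \<Rightarrow> real) \<Rightarrow> bool" where
  "satisfies_H Vmax E w lam x \<longleftrightarrow>
     (\<forall>(v, v') \<in> E. if v \<in> Vmax then x v \<ge> w (v, v') + lam (v, v') * x v'
                     else x v \<le> w (v, v') + lam (v, v') * x v')"

definition solves_eqs :: "('v \<times> 'v) set \<Rightarrow> ('v \<times> 'v \<Rightarrow> real) \<Rightarrow> ('v \<times> 'v \<Rightarrow> real) \<Rightarrow> ('v \<Rightarrow> real) \<Rightarrow> bool" where
  "solves_eqs B w lam x \<longleftrightarrow> (\<forall>(v, v') \<in> B. x v = w (v, v') + lam (v, v') * x v')"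

(* a basis of H: |V| inequations (identified with their edges) whose equality versions
   have a unique common solution *)
definition basis :: "('v::finite \<times> 'v) set \<Rightarrow> ('v \<times> 'v \<Rightarrow> real) \<Rightarrow> ('v \<times> 'v \<Rightarrow> real) \<Rightarrow> ('v \<times> 'v) set \<Rightarrow> bool" where
  "basis E w lam B \<longleftrightarrow> B \<subseteq> E \<and> card B = CARD('v) \<and> (\<exists>!x. solves_eqs B w lam x)"

definition sharp :: "'v::finite set \<Rightarrow> ('v \<times> 'v) set \<Rightarrow> ('v \<times> 'v \<Rightarrow> real) \<Rightarrow> ('v \<times> 'v \<Rightarrow> real) \<Rightarrow> bool" where
  "sharp Vmax E w lam \<longleftrightarrow>
     (\<forall>B x. basis E w lam B \<and> solves_eqs B w lam x \<and> satisfies_H Vmax E w lam x \<longrightarrow>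
        card {e \<in> E. solves_eqs {e} w lam x} = CARD('v))"

end

theory Submission
  imports Defs "HOL-Probability.Probability"
begin

(*
  The value of a joint strategy \<sigma> is the unique fixed point of the contracting one-step
  equations x v = w (v, \<sigma> v) + \<lambda> (v, \<sigma> v) x (\<sigma> v); comparing it with super- and
  sub-solutions shows that any strategy whose value satisfies H is co-optimal, and a
  finite improvement argument (best response for Min, then a maximiser for Max) produces
  one. Hence a strategy co-optimal for G' has non-negative offsets in G'. Perturbing the
  weights by at most \<epsilon> moves every strategy value by at most K = \<epsilon> / (1 - c), where c is
  the contraction, so in G its offsets are at least -(\<epsilon> + K + c K) = -2K > -\<gamma>, and by the
  definition of the gap it is co-optimal in G.

  For sharpness, the solution of the equations of a basis B is a fixed linear function of
  the weights on B. An additional edge e outside B is tight only if the perturbation of e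
  equals an affine function of the perturbations on B; since the perturbation of e is
  independent of them and has no atoms, this has probability zero, and there are only
  finitely many pairs (B, e).
*)

section \<open>Values of joint strategies\<close>

lemma discounted_game_lam_bounds:
  "discounted_game E lam \<Longrightarrow> e \<in> E \<Longrightarrow> 0 \<le> lam e \<and> lam e < 1"
  unfolding discounted_game_def by auto

lemma discounted_game_edges_nonempty: "discounted_game E lam \<Longrightarrow> E \<noteq> {}"
  unfolding discounted_game_def by auto

lemma contraction_bounds:
  fixes E :: "('v::finite \<times> 'v) set"
  assumes "discounted_game E lam"
  shows "0 \<le> contraction E lam" "contraction E lam < 1"
    and "\<And>e. e \<in> E \<Longrightarrow> lam e \<le> contraction E lam"
proof -
  have "contraction E lam \<in> lam ` E"
    unfolding contraction_def
    using discounted_game_edges_nonempty[OF assms] by (intro Max_in) auto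
  then show "0 \<le> contraction E lam" "contraction E lam < 1"
    using discounted_game_lam_bounds[OF assms] by auto
  show "\<And>e. e \<in> E \<Longrightarrow> lam e \<le> contraction E lam"
    unfolding contraction_def by simp
qed

lemma play_0 [simp]: "play \<sigma> v 0 = v"
  unfolding play_def by simp

lemma play_Suc: "play \<sigma> v (Suc i) = play \<sigma> (\<sigma> v) i"
  unfolding play_def by (metis funpow_Suc_right comp_apply)

lemma play_edge: "joint_strategy E \<sigma> \<Longrightarrow> (play \<sigma> v i, play \<sigma> v (Suc i)) \<in> E"
  unfolding joint_strategy_def play_def by simp

lemma summable_strat_val:
  fixes E :: "('v::finite \<times> 'v) set"
  assumes g: "discounted_game E lam" and \<sigma>: "joint_strategy E \<sigma>"
  shows "summable (\<lambda>i. w (play \<sigma> v i, play \<sigma> v (Suc i)) *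
                        (\<Prod>j<i. lam (play \<sigma> v j, play \<sigma> v (Suc j))))"
proof (rule summable_comparison_test'[where N = 0])
  define c where "c = contraction E lam"
  define W where "W = Max ((\<lambda>e. \<bar>w e\<bar>) ` E)"
  have lam: "0 \<le> lam e" "lam e \<le> c" if "e \<in> E" for e
    using discounted_game_lam_bounds[OF g that] contraction_bounds(3)[OF g that] c_def by auto
  have W: "\<bar>w e\<bar> \<le> W" if "e \<in> E" for e
    using that unfolding W_def by simp
  show "summable (\<lambda>i. W * c ^ i)"
    using contraction_bounds[OF g] c_def by (intro summable_mult summable_geometric) auto
  fix i
  let ?p = "\<Prod>j<i. lam (play \<sigma> v j, play \<sigma> v (Suc j))"
  have p: "0 \<le> ?p" by (intro prod_nonneg) (simp add: lam play_edge[OF \<sigma>])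
  have "?p \<le> (\<Prod>j<i. c)" by (intro prod_mono) (simp add: lam play_edge[OF \<sigma>])
  then have pc: "?p \<le> c ^ i" by simp
  have wW: "\<bar>w (play \<sigma> v i, play \<sigma> v (Suc i))\<bar> \<le> W" by (rule W[OF play_edge[OF \<sigma>]])
  then have "\<bar>w (play \<sigma> v i, play \<sigma> v (Suc i))\<bar> * ?p \<le> W * c ^ i"
    by (rule mult_mono[OF _ pc _ p]) (use abs_ge_zero wW in linarith)
  then show "norm (w (play \<sigma> v i, play \<sigma> v (Suc i)) * ?p) \<le> W * c ^ i"
    using p by (simp add: abs_mult)
qed

lemma strat_val_unfold:
  fixes E :: "('v::finite \<times> 'v) set"
  assumes g: "discounted_game E lam" and \<sigma>: "joint_strategy E \<sigma>"
  shows "strat_val w lam \<sigma> v = w (v, \<sigma> v) + lam (v, \<sigma> v) * strat_val w lam \<sigma> (\<sigma> v)"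
proof -
  let ?f = "\<lambda>v i. w (play \<sigma> v i, play \<sigma> v (Suc i)) *
                  (\<Prod>j<i. lam (play \<sigma> v j, play \<sigma> v (Suc j)))"
  have shift: "?f v (Suc i) = lam (v, \<sigma> v) * ?f (\<sigma> v) i" for i
    by (simp add: play_Suc prod.lessThan_Suc_shift del: prod.lessThan_Suc)
  have "strat_val w lam \<sigma> v = ?f v 0 + (\<Sum>i. ?f v (Suc i))"
    unfolding strat_val_def using suminf_split_head[OF summable_strat_val[OF g \<sigma>]] by simp
  also have "(\<Sum>i. ?f v (Suc i)) = lam (v, \<sigma> v) * strat_val w lam \<sigma> (\<sigma> v)"
    unfolding shift strat_val_def by (rule suminf_mult[OF summable_strat_val[OF g \<sigma>]])
  finally show ?thesis by (simp add: play_Suc)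
qed

lemma nonpos_if_le_discounted_successor:
  fixes E :: "('v::finite \<times> 'v) set" and d :: "'v \<Rightarrow> real"
  assumes g: "discounted_game E lam" and \<sigma>: "joint_strategy E \<sigma>"
    and d: "\<And>v. d v \<le> lam (v, \<sigma> v) * d (\<sigma> v)"
  shows "d v \<le> 0"
proof -
  have "Max (range d) \<in> range d" by (rule Max_in) auto
  then obtain v0 where v0: "d v0 = Max (range d)" by (metis rangeE)
  have lam: "0 \<le> lam (v0, \<sigma> v0)" "lam (v0, \<sigma> v0) < 1"
    using discounted_game_lam_bounds[OF g] \<sigma> unfolding joint_strategy_def by auto
  have "d v0 \<le> lam (v0, \<sigma> v0) * d (\<sigma> v0)" by (rule d)
  also have "\<dots> \<le> lam (v0, \<sigma> v0) * d v0"
    using v0 lam by (intro mult_left_mono) auto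
  finally have "(1 - lam (v0, \<sigma> v0)) * d v0 \<le> 0" by (simp add: algebra_simps)
  then have "d v0 \<le> 0" using lam by (simp add: mult_le_0_iff)
  moreover have "d v \<le> d v0" using v0 by simp
  ultimately show ?thesis by simp
qed

lemma strat_val_le_supersolution:
  fixes E :: "('v::finite \<times> 'v) set"
  assumes g: "discounted_game E lam" and \<sigma>: "joint_strategy E \<sigma>"
    and x: "\<And>v. w (v, \<sigma> v) + lam (v, \<sigma> v) * x (\<sigma> v) \<le> x v"
  shows "strat_val w lam \<sigma> v \<le> x v"
proof -
  have "strat_val w lam \<sigma> v - x v \<le> 0"
  proof (rule nonpos_if_le_discounted_successor[OF g \<sigma>])
    fix u
    show "strat_val w lam \<sigma> u - x u \<le> lam (u, \<sigma> u) * (strat_val w lam \<sigma> (\<sigma> u) - x (\<sigma> u))"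
      unfolding right_diff_distrib using strat_val_unfold[OF g \<sigma>, of w u] x[of u] by linarith
  qed
  then show ?thesis by simp
qed

lemma strat_val_ge_subsolution:
  fixes E :: "('v::finite \<times> 'v) set"
  assumes g: "discounted_game E lam" and \<sigma>: "joint_strategy E \<sigma>"
    and x: "\<And>v. x v \<le> w (v, \<sigma> v) + lam (v, \<sigma> v) * x (\<sigma> v)"
  shows "x v \<le> strat_val w lam \<sigma> v"
proof -
  have "x v - strat_val w lam \<sigma> v \<le> 0"
  proof (rule nonpos_if_le_discounted_successor[OF g \<sigma>])
    fix u
    show "x u - strat_val w lam \<sigma> u \<le> lam (u, \<sigma> u) * (x (\<sigma> u) - strat_val w lam \<sigma> (\<sigma> u))"
      unfolding right_diff_distrib using strat_val_unfold[OF g \<sigma>, of w u] x[of u] by linarith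
  qed
  then show ?thesis by simp
qed

lemma strat_val_lt_strict_supersolution:
  fixes E :: "('v::finite \<times> 'v) set"
  assumes g: "discounted_game E lam" and \<sigma>: "joint_strategy E \<sigma>"
    and x: "\<And>y. w (y, \<sigma> y) + lam (y, \<sigma> y) * x (\<sigma> y) \<le> x y"
    and strict: "w (v, \<sigma> v) + lam (v, \<sigma> v) * x (\<sigma> v) < x v"
  shows "strat_val w lam \<sigma> v < x v"
proof -
  have "lam (v, \<sigma> v) * strat_val w lam \<sigma> (\<sigma> v) \<le> lam (v, \<sigma> v) * x (\<sigma> v)"
    using strat_val_le_supersolution[OF g \<sigma> x] discounted_game_lam_bounds[OF g] \<sigma>
    unfolding joint_strategy_def by (simp add: mult_left_mono)
  then show ?thesis using strat_val_unfold[OF g \<sigma>, of w v] strict by linarith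
qed

lemma strat_val_gt_strict_subsolution:
  fixes E :: "('v::finite \<times> 'v) set"
  assumes g: "discounted_game E lam" and \<sigma>: "joint_strategy E \<sigma>"
    and x: "\<And>y. x y \<le> w (y, \<sigma> y) + lam (y, \<sigma> y) * x (\<sigma> y)"
    and strict: "x v < w (v, \<sigma> v) + lam (v, \<sigma> v) * x (\<sigma> v)"
  shows "x v < strat_val w lam \<sigma> v"
proof -
  have "lam (v, \<sigma> v) * x (\<sigma> v) \<le> lam (v, \<sigma> v) * strat_val w lam \<sigma> (\<sigma> v)"
    using strat_val_ge_subsolution[OF g \<sigma> x] discounted_game_lam_bounds[OF g] \<sigma>
    unfolding joint_strategy_def by (simp add: mult_left_mono)
  then show ?thesis using strat_val_unfold[OF g \<sigma>, of w v] strict by linarith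
qed

lemma strat_val_perturbation:
  fixes E :: "('v::finite \<times> 'v) set"
  assumes g: "discounted_game E lam" and \<sigma>: "joint_strategy E \<sigma>"
    and \<delta>: "\<And>e. e \<in> E \<Longrightarrow> \<bar>\<delta> e\<bar> \<le> \<epsilon>"
  shows "\<bar>strat_val (\<lambda>e. w e + \<delta> e) lam \<sigma> v - strat_val w lam \<sigma> v\<bar>
           \<le> \<epsilon> / (1 - contraction E lam)"
proof -
  define c where "c = contraction E lam"
  define K where "K = \<epsilon> / (1 - c)"
  define u where "u = (\<lambda>v. strat_val (\<lambda>e. w e + \<delta> e) lam \<sigma> v - strat_val w lam \<sigma> v)"
  have c: "0 \<le> c" "c < 1" using contraction_bounds[OF g] c_def by auto
  have edge: "(v, \<sigma> v) \<in> E" for v using \<sigma> unfolding joint_strategy_def by blast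
  have "0 \<le> \<epsilon>" using \<delta>[OF edge[of v]] abs_ge_zero[of "\<delta> (v, \<sigma> v)"] by linarith
  then have K: "0 \<le> K" "\<epsilon> = (1 - c) * K" using c unfolding K_def by auto
  have u: "u v = \<delta> (v, \<sigma> v) + lam (v, \<sigma> v) * u (\<sigma> v)" for v
    unfolding u_def right_diff_distrib
    using strat_val_unfold[OF g \<sigma>, of w v] strat_val_unfold[OF g \<sigma>, of "\<lambda>e. w e + \<delta> e" v]
    by (simp add: distrib_left)
  \<comment> \<open>the constant \<open>K\<close> is a super-solution of the equation for the error \<open>u\<close>\<close>
  have slack: "\<bar>\<delta> (v, \<sigma> v)\<bar> \<le> (1 - lam (v, \<sigma> v)) * K" for v
  proof -
    have "lam (v, \<sigma> v) \<le> c" using contraction_bounds(3)[OF g edge] c_def by simp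
    then have "(1 - c) * K \<le> (1 - lam (v, \<sigma> v)) * K" using K by (intro mult_right_mono) auto
    then show ?thesis using \<delta>[OF edge[of v]] K(2) by linarith
  qed
  have distrib: "lam (v, \<sigma> v) * (a - K) = lam (v, \<sigma> v) * a - K + (1 - lam (v, \<sigma> v)) * K"
    for v a by (simp add: algebra_simps)
  have "u v - K \<le> 0"
  proof (rule nonpos_if_le_discounted_successor[OF g \<sigma>])
    fix v
    show "u v - K \<le> lam (v, \<sigma> v) * (u (\<sigma> v) - K)"
      using u[of v] slack[of v] distrib[of v] by (simp only: abs_le_iff) linarith
  qed
  moreover have "- u v - K \<le> 0"
  proof (rule nonpos_if_le_discounted_successor[OF g \<sigma>])
    fix v
    show "- u v - K \<le> lam (v, \<sigma> v) * (- u (\<sigma> v) - K)"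
      using u[of v] slack[of v] distrib[of v] by (simp only: abs_le_iff) linarith
  qed
  ultimately show ?thesis unfolding u_def K_def c_def by simp
qed

section \<open>Positional optimal strategies\<close>

definition combine :: "'v set \<Rightarrow> ('v \<Rightarrow> 'v) \<Rightarrow> ('v \<Rightarrow> 'v) \<Rightarrow> 'v \<Rightarrow> 'v" where
  "combine Vmax s1 s2 = (\<lambda>u. if u \<in> Vmax then s1 u else s2 u)"

lemma joint_strategy_combine:
  "joint_strategy E s1 \<Longrightarrow> joint_strategy E s2 \<Longrightarrow> joint_strategy E (combine Vmax s1 s2)"
  unfolding joint_strategy_def combine_def by auto

lemma joint_strategy_update:
  "joint_strategy E s \<Longrightarrow> (v, u) \<in> E \<Longrightarrow> joint_strategy E (s(v := u))"
  unfolding joint_strategy_def by auto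

lemma finite_nonempty_joint_strategies:
  fixes E :: "('v::finite \<times> 'v) set"
  assumes "discounted_game E lam"
  shows "finite {\<sigma>. joint_strategy E \<sigma>}" "{\<sigma>. joint_strategy E \<sigma>} \<noteq> {}"
  using assms unfolding discounted_game_def joint_strategy_def by (auto intro: choice)

definition min_best_response ::
  "'v set \<Rightarrow> ('v \<times> 'v) set \<Rightarrow> ('v \<times> 'v \<Rightarrow> real) \<Rightarrow> ('v \<times> 'v \<Rightarrow> real) \<Rightarrow> ('v \<Rightarrow> 'v) \<Rightarrow> ('v \<Rightarrow> 'v) \<Rightarrow> bool"
where
  "min_best_response Vmax E w lam s1 s2 \<longleftrightarrow> joint_strategy E s2 \<and>
     (\<forall>v u. v \<notin> Vmax \<longrightarrow> (v, u) \<in> E \<longrightarrow>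
        strat_val w lam (combine Vmax s1 s2) v
          \<le> w (v, u) + lam (v, u) * strat_val w lam (combine Vmax s1 s2) u)"

lemma min_best_response_exists:
  fixes E :: "('v::finite \<times> 'v) set"
  assumes g: "discounted_game E lam" and s1: "joint_strategy E s1"
  shows "\<exists>s2. min_best_response Vmax E w lam s1 s2"
proof -
  let ?val = "\<lambda>s2. strat_val w lam (combine Vmax s1 s2)"
  obtain s2 where s2: "joint_strategy E s2"
    and min: "\<And>s. joint_strategy E s \<Longrightarrow> \<not> (\<Sum>v\<in>UNIV. ?val s v) < (\<Sum>v\<in>UNIV. ?val s2 v)"
    using ex_is_arg_min_if_finite[OF finite_nonempty_joint_strategies[OF g],
        where f = "\<lambda>s. \<Sum>v\<in>UNIV. ?val s v"]
    unfolding is_arg_min_def by auto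
  have s12: "joint_strategy E (combine Vmax s1 s2)" by (rule joint_strategy_combine[OF s1 s2])
  have "?val s2 v \<le> w (v, u) + lam (v, u) * ?val s2 u" if v: "v \<notin> Vmax" and e: "(v, u) \<in> E" for v u
  proof (rule ccontr)
    assume "\<not> ?thesis"
    then have switch: "w (v, u) + lam (v, u) * ?val s2 u < ?val s2 v" by simp
    define s where "s = s2(v := u)"
    let ?t = "combine Vmax s1 s"
    have s: "joint_strategy E s" unfolding s_def by (rule joint_strategy_update[OF s2 e])
    have t: "joint_strategy E ?t" by (rule joint_strategy_combine[OF s1 s])
    have tv: "?t v = u" using v unfolding combine_def s_def by simp
    have super: "w (y, ?t y) + lam (y, ?t y) * ?val s2 (?t y) \<le> ?val s2 y" for y
    proof (cases "y = v")
      case True then show ?thesis using switch tv by simp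
    next
      case False
      then have "?t y = combine Vmax s1 s2 y" unfolding combine_def s_def by simp
      then show ?thesis using strat_val_unfold[OF g s12, of w y] by simp
    qed
    have "?val s y \<le> ?val s2 y" for y by (rule strat_val_le_supersolution[where x = "?val s2", OF g t super])
    moreover have "?val s v < ?val s2 v"
      by (rule strat_val_lt_strict_supersolution[where x = "?val s2", OF g t super]) (use switch tv in simp)
    ultimately have "(\<Sum>y\<in>UNIV. ?val s y) < (\<Sum>y\<in>UNIV. ?val s2 y)"
      by (intro sum_strict_mono_ex1) auto
    then show False using min[OF s] by simp
  qed
  then show ?thesis unfolding min_best_response_def using s2 by blast
qed

lemma optimal_profile_exists:
  fixes E :: "('v::finite \<times> 'v) set"
  assumes g: "discounted_game E lam"
  shows "\<exists>\<sigma>. joint_strategy E \<sigma> \<and> satisfies_H Vmax E w lam (strat_val w lam \<sigma>)"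
proof -
  define R where "R s1 = (SOME s2. min_best_response Vmax E w lam s1 s2)" for s1
  have R: "min_best_response Vmax E w lam s1 (R s1)" if "joint_strategy E s1" for s1
    unfolding R_def using min_best_response_exists[OF g that] by (rule someI_ex)
  let ?val = "\<lambda>s1. strat_val w lam (combine Vmax s1 (R s1))"
  obtain s1 where s1: "joint_strategy E s1"
    and max: "\<And>s. joint_strategy E s \<Longrightarrow> \<not> (\<Sum>v\<in>UNIV. ?val s1 v) < (\<Sum>v\<in>UNIV. ?val s v)"
    using ex_is_arg_min_if_finite[OF finite_nonempty_joint_strategies[OF g],
        where f = "\<lambda>s. - (\<Sum>v\<in>UNIV. ?val s v)"]
    unfolding is_arg_min_def by auto
  define \<sigma> where "\<sigma> = combine Vmax s1 (R s1)"
  have R1: "min_best_response Vmax E w lam s1 (R s1)" by (rule R[OF s1])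
  then have \<sigma>: "joint_strategy E \<sigma>"
    unfolding \<sigma>_def min_best_response_def using joint_strategy_combine[OF s1] by blast
  have min_ineq: "?val s1 v \<le> w (v, u) + lam (v, u) * ?val s1 u" if "v \<notin> Vmax" "(v, u) \<in> E" for v u
    using R1 that unfolding min_best_response_def by blast
  have max_ineq: "w (v, u) + lam (v, u) * ?val s1 u \<le> ?val s1 v" if v: "v \<in> Vmax" and e: "(v, u) \<in> E" for v u
  proof (rule ccontr)
    assume "\<not> ?thesis"
    then have switch: "?val s1 v < w (v, u) + lam (v, u) * ?val s1 u" by simp
    define s where "s = s1(v := u)"
    let ?t = "combine Vmax s (R s)"
    have s: "joint_strategy E s" unfolding s_def by (rule joint_strategy_update[OF s1 e])
    have t: "joint_strategy E ?t"
      using R[OF s] joint_strategy_combine[OF s] unfolding min_best_response_def by blast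
    have tv: "?t v = u" using v unfolding combine_def s_def by simp
    \<comment> \<open>as \<open>R s1\<close> is a best response, the old value satisfies Min's inequality on every edge,
        in particular on those chosen by \<open>R s\<close>\<close>
    have sub: "?val s1 y \<le> w (y, ?t y) + lam (y, ?t y) * ?val s1 (?t y)" for y
    proof (cases "y \<in> Vmax")
      case False
      have "(y, ?t y) \<in> E" using t unfolding joint_strategy_def by blast
      then show ?thesis using min_ineq False by blast
    next
      case True
      show ?thesis
      proof (cases "y = v")
        case True then show ?thesis using switch tv by simp
      next
        case False
        then have "?t y = \<sigma> y" using \<open>y \<in> Vmax\<close> unfolding combine_def s_def \<sigma>_def by simp
        then show ?thesis using strat_val_unfold[OF g \<sigma>, of w y] unfolding \<sigma>_def by simp
      qed
    qed
    have "?val s1 y \<le> ?val s y" for y by (rule strat_val_ge_subsolution[where x = "?val s1", OF g t sub])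
    moreover have "?val s1 v < ?val s v"
      by (rule strat_val_gt_strict_subsolution[where x = "?val s1", OF g t sub]) (use switch tv in simp)
    ultimately have "(\<Sum>y\<in>UNIV. ?val s1 y) < (\<Sum>y\<in>UNIV. ?val s y)"
      by (intro sum_strict_mono_ex1) auto
    then show False using max[OF s] by simp
  qed
  have "satisfies_H Vmax E w lam (strat_val w lam \<sigma>)"
    unfolding satisfies_H_def \<sigma>_def using min_ineq max_ineq by auto
  with \<sigma> show ?thesis by blast
qed

lemma game_val_eq_strat_val:
  fixes E :: "('v::finite \<times> 'v) set"
  assumes g: "discounted_game E lam" and \<sigma>: "joint_strategy E \<sigma>"
    and H: "satisfies_H Vmax E w lam (strat_val w lam \<sigma>)"
  shows "game_val Vmax E w lam = strat_val w lam \<sigma>"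
proof
  fix v
  let ?J = "{\<sigma>. joint_strategy E \<sigma>}"
  let ?x = "strat_val w lam \<sigma>"
  let ?f = "\<lambda>s1 s2. strat_val w lam (combine Vmax s1 s2) v"
  have H_max: "w (y, u) + lam (y, u) * ?x u \<le> ?x y" if "y \<in> Vmax" "(y, u) \<in> E" for y u
    using H that unfolding satisfies_H_def by auto
  have H_min: "?x y \<le> w (y, u) + lam (y, u) * ?x u" if "y \<notin> Vmax" "(y, u) \<in> E" for y u
    using H that unfolding satisfies_H_def by auto
  have edge: "(y, s y) \<in> E" if "joint_strategy E s" for s y
    using that unfolding joint_strategy_def by blast
  have unfold: "?x y = w (y, \<sigma> y) + lam (y, \<sigma> y) * ?x (\<sigma> y)" for y
    by (rule strat_val_unfold[OF g \<sigma>])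
  have \<sigma>_beats_Max: "?f s1 \<sigma> \<le> ?x v" if "joint_strategy E s1" for s1
  proof (rule strat_val_le_supersolution[OF g joint_strategy_combine[OF that \<sigma>]])
    fix y
    show "w (y, combine Vmax s1 \<sigma> y) + lam (y, combine Vmax s1 \<sigma> y) * ?x (combine Vmax s1 \<sigma> y) \<le> ?x y"
    proof (cases "y \<in> Vmax")
      case True then show ?thesis using H_max[OF True edge[OF that]] by (simp add: combine_def)
    next
      case False then show ?thesis using unfold[of y] by (simp add: combine_def)
    qed
  qed
  have \<sigma>_beats_Min: "?x v \<le> ?f \<sigma> s2" if "joint_strategy E s2" for s2
  proof (rule strat_val_ge_subsolution[OF g joint_strategy_combine[OF \<sigma> that]])
    fix y
    show "?x y \<le> w (y, combine Vmax \<sigma> s2 y) + lam (y, combine Vmax \<sigma> s2 y) * ?x (combine Vmax \<sigma> s2 y)"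
    proof (cases "y \<in> Vmax")
      case True then show ?thesis using unfold[of y] by (simp add: combine_def)
    next
      case False then show ?thesis using H_min[OF False edge[OF that]] by (simp add: combine_def)
    qed
  qed
  have J: "finite ?J" "?J \<noteq> {}" by (rule finite_nonempty_joint_strategies[OF g])+
  have "(SUP s1\<in>?J. INF s2\<in>?J. ?f s1 s2) = ?x v"
  proof (rule antisym)
    show "(SUP s1\<in>?J. INF s2\<in>?J. ?f s1 s2) \<le> ?x v"
      using J \<sigma> \<sigma>_beats_Max by (intro cSUP_least) (auto intro: cINF_lower2)
    have "?x v \<le> (INF s2\<in>?J. ?f \<sigma> s2)"
      using J \<sigma>_beats_Min by (intro cINF_greatest) auto
    also have "\<dots> \<le> (SUP s1\<in>?J. INF s2\<in>?J. ?f s1 s2)"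
      using J \<sigma> by (intro cSUP_upper) auto
    finally show "?x v \<le> (SUP s1\<in>?J. INF s2\<in>?J. ?f s1 s2)" .
  qed
  then show "game_val Vmax E w lam v = ?x v"
    unfolding game_val_def combine_def by simp
qed

lemma co_optimal_satisfies_H:
  fixes E :: "('v::finite \<times> 'v) set"
  assumes g: "discounted_game E lam" and "co_optimal Vmax E w lam \<sigma>"
  shows "satisfies_H Vmax E w lam (strat_val w lam \<sigma>)"
proof -
  obtain \<tau> where "joint_strategy E \<tau>" and H: "satisfies_H Vmax E w lam (strat_val w lam \<tau>)"
    using optimal_profile_exists[OF g] by blast
  then have "strat_val w lam \<sigma> = strat_val w lam \<tau>"
    using assms game_val_eq_strat_val[OF g] unfolding co_optimal_def by simp
  with H show ?thesis by simp
qed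

section \<open>Robustness of co-optimality\<close>

lemma satisfies_H_iff_offset_nonneg:
  "satisfies_H Vmax E w lam x \<longleftrightarrow> (\<forall>e\<in>E. 0 \<le> offset Vmax w lam x e)"
  unfolding satisfies_H_def offset_def by auto

lemma offset_perturbation:
  assumes "0 \<le> lam e"
  shows "offset Vmax w' lam x' e
           - (\<bar>w' e - w e\<bar> + \<bar>x' (fst e) - x (fst e)\<bar> + lam e * \<bar>x' (snd e) - x (snd e)\<bar>)
         \<le> offset Vmax w lam x e"
proof -
  have "\<bar>lam e * x' (snd e) - lam e * x (snd e)\<bar> = lam e * \<bar>x' (snd e) - x (snd e)\<bar>"
    using assms by (simp add: abs_mult flip: right_diff_distrib)
  then show ?thesis unfolding offset_def by (simp only: abs_le_iff split: if_split) linarith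
qed

lemma gamma_strat_le:
  fixes E :: "('v::finite \<times> 'v) set"
  assumes "E \<noteq> {}" and "\<And>e. e \<in> E \<Longrightarrow> - a \<le> offset Vmax w lam (strat_val w lam \<sigma>) e"
  shows "gamma_strat Vmax E w lam \<sigma> \<le> a"
proof -
  have "- a \<le> Min (offset Vmax w lam (strat_val w lam \<sigma>) ` E)"
    using assms by (simp add: Min_ge_iff)
  then show ?thesis unfolding gamma_strat_def by linarith
qed

lemma gap_le_gamma_strat:
  "joint_strategy E \<sigma> \<Longrightarrow> \<not> co_optimal Vmax E w lam \<sigma> \<Longrightarrow> gap Vmax E w lam \<le> gamma_strat Vmax E w lam \<sigma>"
  unfolding gap_def by (rule Min_le) auto

lemma co_optimal_of_perturbed:
  fixes E :: "('v::finite \<times> 'v) set"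
  assumes g: "discounted_game E lam"
    and \<epsilon>: "0 < \<epsilon>" "\<epsilon> \<le> (1 - contraction E lam) / 3 * gap Vmax E w lam"
    and \<delta>: "\<And>e. e \<in> E \<Longrightarrow> \<bar>\<delta> e\<bar> \<le> \<epsilon>"
    and co: "co_optimal Vmax E (\<lambda>e. w e + \<delta> e) lam \<sigma>"
  shows "co_optimal Vmax E w lam \<sigma>"
proof (rule ccontr)
  assume not_co: "\<not> co_optimal Vmax E w lam \<sigma>"
  define c where "c = contraction E lam"
  define K where "K = \<epsilon> / (1 - c)"
  let ?x = "strat_val w lam \<sigma>" and ?x' = "strat_val (\<lambda>e. w e + \<delta> e) lam \<sigma>"
  have c: "0 \<le> c" "c < 1" "\<And>e. e \<in> E \<Longrightarrow> lam e \<le> c"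
    using contraction_bounds[OF g] unfolding c_def by auto
  then have K: "0 < K" "\<epsilon> = (1 - c) * K" using \<epsilon>(1) unfolding K_def by auto
  have \<sigma>: "joint_strategy E \<sigma>" using co unfolding co_optimal_def by simp
  have close: "\<bar>?x' v - ?x v\<bar> \<le> K" for v
    using strat_val_perturbation[OF g \<sigma> \<delta>] unfolding K_def c_def by simp
  have H': "0 \<le> offset Vmax (\<lambda>e. w e + \<delta> e) lam ?x' e" if "e \<in> E" for e
    using co_optimal_satisfies_H[OF g co] that satisfies_H_iff_offset_nonneg by blast
  have "- (2 * K) \<le> offset Vmax w lam ?x e" if e: "e \<in> E" for e
  proof -
    have "lam e * \<bar>?x' (snd e) - ?x (snd e)\<bar> \<le> c * K"
      using discounted_game_lam_bounds[OF g e] c(3)[OF e] close K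
      by (intro mult_mono) auto
    then show ?thesis
      using offset_perturbation[of lam e Vmax "\<lambda>e. w e + \<delta> e" ?x' w ?x]
        discounted_game_lam_bounds[OF g e] H'[OF e] \<delta>[OF e] close[of "fst e"] K(2)
      by (simp add: algebra_simps)
  qed
  then have "gamma_strat Vmax E w lam \<sigma> \<le> 2 * K"
    using discounted_game_edges_nonempty[OF g] by (intro gamma_strat_le) auto
  moreover have "gap Vmax E w lam \<le> gamma_strat Vmax E w lam \<sigma>"
    by (rule gap_le_gamma_strat[OF \<sigma> not_co])
  moreover have "3 * K \<le> gap Vmax E w lam"
  proof (rule mult_left_le_imp_le)
    show "(1 - c) * (3 * K) \<le> (1 - c) * gap Vmax E w lam"
      using \<epsilon>(2) K(2) unfolding c_def[symmetric] by simp
  qed (use c in simp)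
  ultimately show False using K by linarith
qed

section \<open>Almost sure sharpness\<close>

lemma measurable_component_borel:
  "i \<in> I \<Longrightarrow> sets (M i) = sets borel \<Longrightarrow> (\<lambda>x. x i) \<in> borel_measurable (PiM I M)"
  using measurable_component_singleton[of i I M] measurable_cong_sets by blast

lemma null_sets_PiM_coordinate_eq:
  fixes M :: "'i \<Rightarrow> real measure" and \<phi> :: "('i \<Rightarrow> real) \<Rightarrow> real"
  assumes M: "\<And>i. sigma_finite_measure (M i)" "\<And>i. sets (M i) = sets borel"
    and atomless: "\<And>y. emeasure (M e) {y} = 0"
    and E: "finite E" "e \<in> E"
    and \<phi>: "\<phi> \<in> borel_measurable (PiM E M)" "\<And>\<delta> y. \<phi> (\<delta>(e := y)) = \<phi> \<delta>"
  shows "{\<delta> \<in> space (PiM E M). \<delta> e = \<phi> \<delta>} \<in> null_sets (PiM E M)"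
proof -
  interpret product_sigma_finite M
    unfolding product_sigma_finite_def using M(1) by blast
  define N where "N = {\<delta> \<in> space (PiM E M). \<delta> e = \<phi> \<delta>}"
  define I where "I = E - {e}"
  have I: "E = insert e I" "e \<notin> I" "finite I" using E unfolding I_def by auto
  have N: "N \<in> sets (PiM E M)"
    unfolding N_def using measurable_component_borel[OF E(2) M(2)] \<phi>(1)
    by (rule measurable_equality_set)
  have space: "space (M i) = UNIV" for i
    using sets_eq_imp_space_eq[OF M(2)] by simp
  have fibre: "(\<integral>\<^sup>+y. indicator N (x(e := y)) \<partial>M e) = 0" if x: "x \<in> space (PiM I M)" for x
  proof -
    have "x(e := y) \<in> space (PiM E M)" for y
      using x unfolding I(1) space_PiM by (intro PiE_fun_upd) (auto simp: space)
    then have "indicator N (x(e := y)) = (indicator {\<phi> x} y :: ennreal)" for y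
      unfolding N_def using \<phi>(2) by (simp add: indicator_def)
    then have "(\<integral>\<^sup>+y. indicator N (x(e := y)) \<partial>M e) = emeasure (M e) {\<phi> x}"
      using M(2) by simp
    then show ?thesis using atomless by simp
  qed
  have "emeasure (PiM E M) N = (\<integral>\<^sup>+x. (\<integral>\<^sup>+y. indicator N (x(e := y)) \<partial>M e) \<partial>PiM I M)"
    using N unfolding I(1) by (simp add: product_nn_integral_insert[OF I(3,2)] flip: nn_integral_indicator)
  also have "\<dots> = (\<integral>\<^sup>+x. 0 \<partial>PiM I M)"
    by (rule nn_integral_cong) (rule fibre)
  finally show ?thesis using N unfolding N_def by (intro null_setsI) simp_all
qed

lemma uniform_measure_Ioo:
  fixes a b :: real
  assumes "a < b"
  shows "prob_space (uniform_measure lborel {a<..<b})"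
    and "sets (uniform_measure lborel {a<..<b}) = sets borel"
    and "emeasure (uniform_measure lborel {a<..<b}) {y} = 0"
proof -
  show "prob_space (uniform_measure lborel {a<..<b})"
    using assms by (intro prob_space_uniform_measure) (auto simp: emeasure_lborel_Ioo)
  show "sets (uniform_measure lborel {a<..<b}) = sets borel" by simp
  have "emeasure lborel ({a<..<b} \<inter> {y}) \<le> emeasure lborel {y}" by (intro emeasure_mono) auto
  then show "emeasure (uniform_measure lborel {a<..<b}) {y} = 0" by simp
qed

lemma basis_solution_linear:
  fixes B :: "('v::finite \<times> 'v) set" and lam :: "'v \<times> 'v \<Rightarrow> real"
  assumes unique: "\<exists>!x. solves_eqs B w lam x"
  obtains \<beta> :: "'v \<times> 'v \<Rightarrow> 'v \<Rightarrow> real"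
  where "\<And>w' x v. solves_eqs B w' lam x \<Longrightarrow> x v = (\<Sum>e\<in>B. w' e * \<beta> e v)"
proof -
  define f :: "real^'v \<Rightarrow> real^('v \<times> 'v)" where
    "f z = (\<chi> e. if e \<in> B then z $ fst e - lam e * z $ snd e else 0)" for z
  have lin: "linear f"
    by (rule linearI) (auto simp: f_def vec_eq_iff algebra_simps)
  \<comment> \<open>uniqueness for the weights \<open>w\<close> means that the homogeneous system has only the trivial solution\<close>
  have inj: "inj f"
  proof (rule injI)
    fix z1 z2 assume eq: "f z1 = f z2"
    from unique obtain x0 where x0: "solves_eqs B w lam x0"
      and un: "\<And>x. solves_eqs B w lam x \<Longrightarrow> x = x0" by blast
    have "solves_eqs B w lam (\<lambda>v. x0 v + (z1 $ v - z2 $ v))"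
      unfolding solves_eqs_def
    proof (clarify)
      fix a b assume ab: "(a, b) \<in> B"
      have "z1 $ a - lam (a, b) * z1 $ b = z2 $ a - lam (a, b) * z2 $ b"
        using arg_cong[OF eq, of "\<lambda>z. z $ (a, b)"] ab unfolding f_def by simp
      moreover have "x0 a = w (a, b) + lam (a, b) * x0 b" using x0 ab unfolding solves_eqs_def by blast
      ultimately show "x0 a + (z1 $ a - z2 $ a) = w (a, b) + lam (a, b) * (x0 b + (z1 $ b - z2 $ b))"
        by (simp add: algebra_simps)
    qed
    then have "(\<lambda>v. x0 v + (z1 $ v - z2 $ v)) = x0" by (rule un)
    then show "z1 = z2" by (simp add: fun_eq_iff vec_eq_iff)
  qed
  obtain g where g: "linear g" "g \<circ> f = id"
    using linear_injective_left_inverse[OF lin inj] by blast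
  show ?thesis
  proof
    fix w' x v assume x: "solves_eqs B w' lam x"
    have "f (\<chi> v. x v) = (\<chi> e. if e \<in> B then w' e else 0)"
      using x unfolding f_def solves_eqs_def by (auto simp: vec_eq_iff)
    also have "\<dots> = (\<Sum>e\<in>B. w' e *\<^sub>R axis e 1)"
      by (simp add: vec_eq_iff sum_component axis_def if_distrib sum.delta' cong: if_cong)
    finally have fx: "f (\<chi> v. x v) = (\<Sum>e\<in>B. w' e *\<^sub>R axis e 1)" .
    have "(\<chi> v. x v) = g (f (\<chi> v. x v))" using g(2) by (metis comp_apply id_apply)
    also have "\<dots> = (\<Sum>e\<in>B. w' e *\<^sub>R g (axis e 1))"
      unfolding fx using g(1) by (simp add: linear_sum linear_scale)
    finally have "(\<chi> v. x v) = (\<Sum>e\<in>B. w' e *\<^sub>R g (axis e 1))" .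
    from arg_cong[OF this, of "\<lambda>z. z $ v"]
    show "x v = (\<Sum>e\<in>B. w' e * g (axis e 1) $ v)" by (simp add: sum_component)
  qed
qed

lemma AE_no_extra_tight_edge:
  fixes E :: "('v::finite \<times> 'v) set" and w lam :: "'v \<times> 'v \<Rightarrow> real"
  assumes \<epsilon>: "0 < \<epsilon>" and B: "B \<subseteq> E" and e: "e \<in> E" "e \<notin> B"
  shows "AE \<delta> in PiM E (\<lambda>_. uniform_measure lborel {-\<epsilon><..<\<epsilon>}).
           basis E (\<lambda>e. w e + \<delta> e) lam B \<longrightarrow>
             (\<forall>x. solves_eqs B (\<lambda>e. w e + \<delta> e) lam x \<longrightarrow> \<not> solves_eqs {e} (\<lambda>e. w e + \<delta> e) lam x)"
proof (cases "\<exists>\<delta>. basis E (\<lambda>e. w e + \<delta> e) lam B")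
  case False
  then show ?thesis by simp
next
  case True
  then obtain \<delta>\<^sub>0 where "basis E (\<lambda>e. w e + \<delta>\<^sub>0 e) lam B" by blast
  then have "\<exists>!x. solves_eqs B (\<lambda>e. w e + \<delta>\<^sub>0 e) lam x" unfolding basis_def by blast
  then obtain \<beta> where \<beta>: "\<And>w' x v. solves_eqs B w' lam x \<Longrightarrow> x v = (\<Sum>e\<in>B. w' e * \<beta> e v)"
    by (rule basis_solution_linear) blast
  define M :: "'v \<times> 'v \<Rightarrow> real measure" where "M = (\<lambda>_. uniform_measure lborel {-\<epsilon><..<\<epsilon>})"
  have M: "prob_space (M i)" "sets (M i) = sets borel" "emeasure (M i) {y} = 0" for i y
    using uniform_measure_Ioo[of "-\<epsilon>" \<epsilon>] \<epsilon> unfolding M_def by auto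
  \<comment> \<open>on a basis, tightness of \<open>e\<close> pins \<open>\<delta> e\<close> to an affine function of the other perturbations\<close>
  define \<phi> where "\<phi> \<delta> = (\<Sum>e'\<in>B. (w e' + \<delta> e') * (\<beta> e' (fst e) - lam e * \<beta> e' (snd e))) - w e"
    for \<delta> :: "'v \<times> 'v \<Rightarrow> real"
  have "\<phi> \<in> borel_measurable (PiM E M)"
    unfolding \<phi>_def using B
    by (intro borel_measurable_diff borel_measurable_const borel_measurable_sum
        borel_measurable_times borel_measurable_add measurable_component_borel M(2)) auto
  moreover have "\<phi> (\<delta>(e := y)) = \<phi> \<delta>" for \<delta> y
    unfolding \<phi>_def using e(2) by (intro arg_cong2[where f = minus] sum.cong) auto
  ultimately have null: "{\<delta> \<in> space (PiM E M). \<delta> e = \<phi> \<delta>} \<in> null_sets (PiM E M)"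
    using M e(1) by (intro null_sets_PiM_coordinate_eq prob_space_imp_sigma_finite) auto
  have "\<delta> e = \<phi> \<delta>"
    if "solves_eqs B (\<lambda>e. w e + \<delta> e) lam x" "solves_eqs {e} (\<lambda>e. w e + \<delta> e) lam x" for \<delta> x
  proof -
    have "w e + \<delta> e = x (fst e) - lam e * x (snd e)"
      using that(2) unfolding solves_eqs_def by (cases e) auto
    also have "\<dots> = (\<Sum>e'\<in>B. (w e' + \<delta> e') * (\<beta> e' (fst e) - lam e * \<beta> e' (snd e)))"
      unfolding \<beta>[OF that(1)] by (simp add: sum_distrib_left sum_subtractf algebra_simps)
    finally show ?thesis unfolding \<phi>_def by simp
  qed
  then show ?thesis
    unfolding M_def[symmetric] by (intro AE_I'[OF null]) auto
qed

lemma sharp_if_no_extra_tight_edge: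
  fixes E :: "('v::finite \<times> 'v) set"
  assumes "\<And>B e x. B \<subseteq> E \<Longrightarrow> e \<in> E \<Longrightarrow> e \<notin> B \<Longrightarrow> basis E w lam B \<Longrightarrow> solves_eqs B w lam x
             \<Longrightarrow> \<not> solves_eqs {e} w lam x"
  shows "sharp Vmax E w lam"
  unfolding sharp_def
proof (intro allI impI)
  fix B x assume Bx: "basis E w lam B \<and> solves_eqs B w lam x \<and> satisfies_H Vmax E w lam x"
  have "B \<subseteq> E" using Bx unfolding basis_def by simp
  then have "{e \<in> E. solves_eqs {e} w lam x} = B"
    using assms[of B _ x] Bx unfolding solves_eqs_def by fast
  then show "card {e \<in> E. solves_eqs {e} w lam x} = CARD('v)"
    using Bx unfolding basis_def by simp
qed

theorem corollary4p7:
  fixes Vmax :: "'v::finite set"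
    and E :: "('v \<times> 'v) set"
    and w lam :: "'v \<times> 'v \<Rightarrow> real"
    and \<epsilon> :: real
  assumes "discounted_game E lam"
    and "\<exists>\<sigma>. joint_strategy E \<sigma> \<and> \<not> co_optimal Vmax E w lam \<sigma>"
    and "0 < \<epsilon>"
    and "\<epsilon> \<le> (1 - contraction E lam) / 3 * gap Vmax E w lam"
  shows "(\<forall>\<delta>. (\<forall>e\<in>E. \<delta> e \<in> {-\<epsilon><..<\<epsilon>}) \<longrightarrow>
            (\<forall>\<sigma>. co_optimal Vmax E (\<lambda>e. w e + \<delta> e) lam \<sigma> \<longrightarrow> co_optimal Vmax E w lam \<sigma>))
       \<and> (AE \<delta> in PiM E (\<lambda>_. uniform_measure lborel {-\<epsilon><..<\<epsilon>}).
            sharp Vmax E (\<lambda>e. w e + \<delta> e) lam)"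
proof (intro conjI allI impI)
  \<comment> \<open>the second assumption only makes the gap well defined; the proof does not need it\<close>
  fix \<delta> \<sigma>
  assume \<delta>: "\<forall>e\<in>E. \<delta> e \<in> {-\<epsilon><..<\<epsilon>}" and co: "co_optimal Vmax E (\<lambda>e. w e + \<delta> e) lam \<sigma>"
  have "\<bar>\<delta> e\<bar> \<le> \<epsilon>" if "e \<in> E" for e
    using bspec[OF \<delta> that] by (simp add: abs_le_iff)
  then show "co_optimal Vmax E w lam \<sigma>"
    by (rule co_optimal_of_perturbed[OF assms(1,3,4) _ co])
next
  define S where "S = {(B, e). B \<subseteq> E \<and> e \<in> E \<and> e \<notin> B}"
  have "finite S" by (rule finite_subset[of _ "Pow E \<times> E"]) (auto simp: S_def)
  then have "AE \<delta> in PiM E (\<lambda>_. uniform_measure lborel {-\<epsilon><..<\<epsilon>}). \<forall>(B, e)\<in>S.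
      basis E (\<lambda>e. w e + \<delta> e) lam B \<longrightarrow>
        (\<forall>x. solves_eqs B (\<lambda>e. w e + \<delta> e) lam x \<longrightarrow> \<not> solves_eqs {e} (\<lambda>e. w e + \<delta> e) lam x)"
    by (rule AE_finite_allI) (auto simp: S_def intro: AE_no_extra_tight_edge[OF assms(3)])
  then show "AE \<delta> in PiM E (\<lambda>_. uniform_measure lborel {-\<epsilon><..<\<epsilon>}). sharp Vmax E (\<lambda>e. w e + \<delta> e) lam"
    by (rule eventually_mono) (auto simp: S_def intro!: sharp_if_no_extra_tight_edge)
qed

end
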